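(* Let $(V,A,\succ)$ be an election, $\mathcal{I}$ a probability distribution on $[0,1]$, and let $(x,y,p)$ be a LEO with income distribution $\mathcal{I}$ and total budget $B=1$. Then $\sum_{a\in A}y_a=1$ and $x_{v,a}=y_a$ for all $a\in A$ and $v\in V$.
   Context: An election $(V,A,\succ)$: finite nonempty voter set $V$, finite candidate set $A$, strict linear order $\succ_v$ on $A$ per voter. Extend $\succ_v$ to $A\cup\{\emptyset\}$ with $\emptyset$ strictly below all candidates. Given prices $p_v\in[0,1]^{A\cup\{\emptyset\}}$ with $p_{v,\emptyset}=0$ and income $b\ge0$, voter $v$'s demand is the $\succ_v$-maximal element of $\{a\in A\cup\{\emptyset\}: p_{v,a}\le b\}$; the random demand $\mathcal{D}_v(p_v,\mathcal{I})$ is this demand with $b\sim\mathcal{I}$. A LEO $(x,y,p)$ with income $\mathcal{I}$ and budget $B>0$ consists of prices $p_v\in[0,1]^{A\cup\{\emptyset\}}$ with $p_{v,\emptyset}=0$ and consumptions $x_v\in[0,1]^{A\cup\{\emptyset\}}$ for each $v\in V$, and $y\in[0,B]^A$, such that: (1) $x_{v,a}=\Pr[\mathcal{D}_v(p_v,\mathcal{I})=a]$ for all $a\in A\cup\{\emptyset\}$; (2) for each $a\in A$, $x_{v,a}\le y_a$, and if $x_{v,a}<y_a$ then $p_{v,a}=0$; (3) $y$ maximizes $\sum_{a\in A}\big(\sum_{v\in V}p_{v,a}\big)z_a$ over $z\in\mathbb{R}_{\ge0}^A$ with $\sum_a z_a=B$. *)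

theory Defs
  imports "HOL-Probability.Probability"
begin

text \<open>Candidates are of type 'a; the option type models A extended by the empty
  outcome: None is the empty outcome, Some a is candidate a.
  A preference is a relation r with (a, b) in r meaning a is strictly preferred to b.\<close>

definition election :: "'v set \<Rightarrow> 'a set \<Rightarrow> ('v \<Rightarrow> ('a \<times> 'a) set) \<Rightarrow> bool" where
  "election V A pref \<longleftrightarrow> finite V \<and> V \<noteq> {} \<and> finite A \<and>
     (\<forall>v\<in>V. strict_linear_order_on A (pref v))"

definition opts :: "'a set \<Rightarrow> 'a option set" where
  "opts A = insert None (Some ` A)"

fun ext_pref :: "('a \<times> 'a) set \<Rightarrow> 'a option \<Rightarrow> 'a option \<Rightarrow> bool" where
  "ext_pref r (Some a) (Some b) = ((a, b) \<in> r)"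
| "ext_pref r (Some a) None = True"
| "ext_pref r None _ = False"

definition demand :: "'a set \<Rightarrow> ('a \<times> 'a) set \<Rightarrow> ('a option \<Rightarrow> real) \<Rightarrow> real \<Rightarrow> 'a option" where
  "demand A r q b = (THE c. c \<in> opts A \<and> q c \<le> b \<and>
      (\<forall>c'\<in>opts A. q c' \<le> b \<longrightarrow> c' \<noteq> c \<longrightarrow> ext_pref r c c'))"

definition income_dist :: "real measure \<Rightarrow> bool" where
  "income_dist I \<longleftrightarrow> prob_space I \<and> sets I = sets borel \<and> measure I {0..1} = 1"

definition LEO :: "'v set \<Rightarrow> 'a set \<Rightarrow> ('v \<Rightarrow> ('a \<times> 'a) set) \<Rightarrow> real measure \<Rightarrow> real \<Rightarrow>
    ('v \<Rightarrow> 'a option \<Rightarrow> real) \<Rightarrow> ('a \<Rightarrow> real) \<Rightarrow> ('v \<Rightarrow> 'a option \<Rightarrow> real) \<Rightarrow> bool" where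
  "LEO V A pref I B x y p \<longleftrightarrow>
     (\<forall>v\<in>V. p v None = 0 \<and> (\<forall>c\<in>opts A. 0 \<le> p v c \<and> p v c \<le> 1)
                       \<and> (\<forall>c\<in>opts A. 0 \<le> x v c \<and> x v c \<le> 1)) \<and>
     (\<forall>a\<in>A. 0 \<le> y a \<and> y a \<le> B) \<and>
     (\<forall>v\<in>V. \<forall>c\<in>opts A. x v c = measure I {b \<in> space I. demand A (pref v) (p v) b = c}) \<and>
     (\<forall>v\<in>V. \<forall>a\<in>A. x v (Some a) \<le> y a \<and> (x v (Some a) < y a \<longrightarrow> p v (Some a) = 0)) \<and>
     ((\<forall>a\<in>A. 0 \<le> y a) \<and> (\<Sum>a\<in>A. y a) = B \<and>
      (\<forall>z. (\<forall>a\<in>A. 0 \<le> z a) \<and> (\<Sum>a\<in>A. z a) = B \<longrightarrow>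
          (\<Sum>a\<in>A. (\<Sum>v\<in>V. p v (Some a)) * z a) \<le> (\<Sum>a\<in>A. (\<Sum>v\<in>V. p v (Some a)) * y a)))"

end

theory Submission imports Defs begin

text \<open>If some voter v consumed strictly less than y a of a candidate a, market clearing
  makes a free for v. Then v can always afford a, which she prefers to the empty
  outcome, so she demands a candidate at every income in [0,1]; her consumptions of
  candidates therefore sum to 1 = \<Sum>a. y a. This contradicts x v a \<le> y a for all a
  with strict inequality at a.\<close>

lemma opts_finite [simp]: "finite (opts A) \<longleftrightarrow> finite A"
  by (auto simp: opts_def dest: finite_imageD)

lemma sum_opts: "finite A \<Longrightarrow> sum f (opts A) = f None + (\<Sum>a\<in>A. f (Some a))"
  by (simp add: opts_def sum.reindex)

lemma ext_pref_total:
  "strict_linear_order_on A r \<Longrightarrow> c \<in> opts A \<Longrightarrow> d \<in> opts A \<Longrightarrow> c \<noteq> d \<Longrightarrow>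
    ext_pref r c d \<or> ext_pref r d c"
  by (cases c; cases d) (auto simp: opts_def strict_linear_order_on_def total_on_def)

lemma ext_pref_trans:
  "strict_linear_order_on A r \<Longrightarrow> ext_pref r c d \<Longrightarrow> ext_pref r d e \<Longrightarrow> ext_pref r c e"
  by (cases c; cases d; cases e) (auto simp: strict_linear_order_on_def dest: transD)

lemma ext_pref_asym:
  "strict_linear_order_on A r \<Longrightarrow> ext_pref r c d \<Longrightarrow> \<not> ext_pref r d c"
  by (cases c; cases d) (auto simp: strict_linear_order_on_def irrefl_def dest: transD)

lemma ext_pref_maximum_exists:
  assumes "strict_linear_order_on A r" "finite S" "S \<noteq> {}" "S \<subseteq> opts A"
  shows "\<exists>m\<in>S. \<forall>c\<in>S. c \<noteq> m \<longrightarrow> ext_pref r m c"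
  using assms(2-4)
proof (induction S rule: finite_ne_induct)
  case (singleton x)
  then show ?case by auto
next
  case (insert x F)
  then obtain m where m: "m \<in> F" "\<forall>c\<in>F. c \<noteq> m \<longrightarrow> ext_pref r m c" by auto
  show ?case
  proof (cases "ext_pref r x m")
    case True
    then show ?thesis using m ext_pref_trans[OF assms(1)] by (metis insert_iff)
  next
    case False
    then have "ext_pref r m x" using ext_pref_total[OF assms(1), of m x] m insert by auto
    then show ?thesis using m by auto
  qed
qed

lemma demand_best_affordable:
  assumes "finite A" "strict_linear_order_on A r" "q None = 0" "0 \<le> b"
  shows demand_in_opts: "demand A r q b \<in> opts A"
    and demand_preferred:
      "\<And>c. c \<in> opts A \<Longrightarrow> q c \<le> b \<Longrightarrow> c \<noteq> demand A r q b \<Longrightarrow> ext_pref r (demand A r q b) c"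
proof -
  let ?best = "\<lambda>c. c \<in> opts A \<and> q c \<le> b \<and>
    (\<forall>c'\<in>opts A. q c' \<le> b \<longrightarrow> c' \<noteq> c \<longrightarrow> ext_pref r c c')"
  have "None \<in> {c \<in> opts A. q c \<le> b}"
    using assms(3,4) by (simp add: opts_def)
  then obtain m where "?best m"
    using ext_pref_maximum_exists[OF assms(2), of "{c \<in> opts A. q c \<le> b}"] assms(1) by auto
  moreover have "c = m" if "?best c" for c
    using that \<open>?best m\<close> ext_pref_asym[OF assms(2)] by blast
  ultimately have "?best (demand A r q b)"
    unfolding demand_def by (rule theI)
  then show "demand A r q b \<in> opts A"
    "\<And>c. c \<in> opts A \<Longrightarrow> q c \<le> b \<Longrightarrow> c \<noteq> demand A r q b \<Longrightarrow> ext_pref r (demand A r q b) c"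
    by auto
qed

lemma demand_not_None_if_free:
  assumes "finite A" "strict_linear_order_on A r" "q None = 0" "0 \<le> b"
    and "a \<in> A" "q (Some a) = 0"
  shows "demand A r q b \<noteq> None"
proof
  assume "demand A r q b = None"
  moreover have "Some a \<in> opts A" using assms(5) by (simp add: opts_def)
  ultimately have "ext_pref r None (Some a)"
    using demand_preferred[of A r q b, OF assms(1-4) \<open>Some a \<in> opts A\<close>] assms(4,6) by auto
  then show False by simp
qed

lemma sets_borel_affordable_eq:
  assumes "finite C" shows "{b::real. {c \<in> C. q c \<le> b} = T} \<in> sets borel"
proof -
  have "{b::real. {c \<in> C. q c \<le> b} = T} =
      {b. T \<subseteq> C \<and> (\<forall>d\<in>C. q d \<le> b \<longleftrightarrow> d \<in> T)}"
    by blast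
  also have "\<dots> \<in> sets borel"
    using assms by measurable
  finally show ?thesis .
qed

text \<open>The demand depends on the income only through the (finitely many possible)
  sets of affordable outcomes, each of which occurs on a Borel set of incomes.\<close>

lemma sets_borel_demand_eq:
  assumes "finite A"
  shows "{b. demand A r q b = c} \<in> sets borel"
proof -
  define affordable where "affordable b = {d \<in> opts A. q d \<le> b}" for b
  have "demand A r q b =
      (THE c. c \<in> affordable b \<and> (\<forall>c'\<in>affordable b. c' \<noteq> c \<longrightarrow> ext_pref r c c'))" for b
    unfolding demand_def affordable_def by (rule arg_cong[where f = The]) auto
  then have "demand A r q b = demand A r q b'" if "affordable b = affordable b'" for b b'
    using that by simp
  then have level_sets:
      "{b. demand A r q b = c} = (\<Union>T\<in>affordable ` {b. demand A r q b = c}. {b. affordable b = T})"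
    by blast
  have "finite (affordable ` {b. demand A r q b = c})"
    by (rule finite_subset[of _ "Pow (opts A)"]) (auto simp: affordable_def assms)
  then have "(\<Union>T\<in>affordable ` {b. demand A r q b = c}. {b. affordable b = T}) \<in> sets borel"
    by (intro sets.finite_UN) (simp_all add: affordable_def sets_borel_affordable_eq assms)
  with level_sets show ?thesis
    by (rule ssubst)
qed

lemma
  assumes "income_dist I" "finite A" "strict_linear_order_on A r" "q None = 0"
  shows demand_distribution_sum:
      "(\<Sum>c\<in>opts A. measure I {b \<in> space I. demand A r q b = c}) = 1"
    and demand_None_null_if_free:
      "a \<in> A \<Longrightarrow> q (Some a) = 0 \<Longrightarrow> measure I {b \<in> space I. demand A r q b = None} = 0"
proof -
  interpret prob_space I using assms(1) by (simp add: income_dist_def)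
  have sets_I: "sets I = sets borel" and mass: "measure I {0..1} = 1"
    using assms(1) by (auto simp: income_dist_def)
  have space_I: "space I = UNIV" using sets_eq_imp_space_eq[OF sets_I] by simp
  define D where "D c = {b \<in> space I. demand A r q b = c}" for c
  have D_sets: "D c \<in> sets I" for c
    using sets_borel_demand_eq[OF assms(2)] by (simp add: D_def space_I sets_I)
  have "{0..1} \<subseteq> (\<Union>c\<in>opts A. D c)"
    using demand_in_opts[of A r q, OF assms(2-4)] by (auto simp: D_def space_I)
  then have "1 \<le> measure I (\<Union>c\<in>opts A. D c)"
    using mass finite_measure_mono D_sets assms(2) by (metis opts_finite sets.finite_UN)
  moreover have "measure I (\<Union>c\<in>opts A. D c) = (\<Sum>c\<in>opts A. measure I (D c))"
    using D_sets assms(2) by (intro measure_finite_Union) (auto simp: disjoint_family_on_def D_def)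
  ultimately show "(\<Sum>c\<in>opts A. measure I (D c)) = 1"
    using prob_le_1 by (metis order_antisym)
  assume "a \<in> A" "q (Some a) = 0"
  then have "D None \<subseteq> space I - {0..1}"
    using demand_not_None_if_free[of A r q _ a, OF assms(2-4)] by (fastforce simp: D_def)
  then have "measure I (D None) \<le> measure I (space I - {0..1})"
    by (rule finite_measure_mono) (simp add: sets_I space_I)
  also have "\<dots> = 0"
    using prob_compl[of "{0..1}"] mass sets_I by simp
  finally show "measure I (D None) = 0"
    using measure_nonneg[of I "D None"] by linarith
qed

lemma LEO_consumption_eq_supply:
  assumes el: "election V A pref" and inc: "income_dist I" and leo: "LEO V A pref I 1 x y p"
    and v: "v \<in> V" and a: "a \<in> A"
  shows "x v (Some a) = y a"
proof (rule ccontr)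
  assume "x v (Some a) \<noteq> y a"
  have le: "x v (Some a') \<le> y a'" if "a' \<in> A" for a'
    using leo v that unfolding LEO_def by blast
  with a \<open>x v (Some a) \<noteq> y a\<close> have lt: "x v (Some a) < y a"
    by force
  have free: "p v (Some a) = 0" and no_fee: "p v None = 0" and total_supply: "(\<Sum>a\<in>A. y a) = 1"
    and x_eq: "\<And>c. c \<in> opts A \<Longrightarrow> x v c = measure I {b \<in> space I. demand A (pref v) (p v) b = c}"
    using leo v a lt unfolding LEO_def by auto
  have fin: "finite A" and slo: "strict_linear_order_on A (pref v)"
    using el v unfolding election_def by auto
  have "x v None = 0"
    using demand_None_null_if_free[of I A "pref v" "p v", OF inc fin slo no_fee a free] x_eq by (simp add: opts_def)
  have "(\<Sum>c\<in>opts A. x v c) = 1"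
    using demand_distribution_sum[of I A "pref v" "p v", OF inc fin slo no_fee] x_eq
    by (simp cong: sum.cong_simp)
  with \<open>x v None = 0\<close> have "(\<Sum>a\<in>A. x v (Some a)) = 1"
    by (simp add: sum_opts[OF fin])
  moreover have "(\<Sum>a\<in>A. x v (Some a)) < (\<Sum>a\<in>A. y a)"
    using fin le lt a by (intro sum_strict_mono_ex1) auto
  ultimately show False
    using total_supply by simp
qed

theorem mainTheorem7:
  fixes V :: "'v set" and A :: "'a set" and pref :: "'v \<Rightarrow> ('a \<times> 'a) set"
    and I :: "real measure"
    and x :: "'v \<Rightarrow> 'a option \<Rightarrow> real" and y :: "'a \<Rightarrow> real"
    and p :: "'v \<Rightarrow> 'a option \<Rightarrow> real"
  assumes "election V A pref"
    and "income_dist I"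
    and "LEO V A pref I 1 x y p"
  shows "(\<Sum>a\<in>A. y a) = 1 \<and> (\<forall>a\<in>A. \<forall>v\<in>V. x v (Some a) = y a)"
  using LEO_consumption_eq_supply[OF assms] assms(3) unfolding LEO_def by blast

end
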